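(* Let $s<1$, $r\le0$ and $N\gg1$. The multipliers $\sigma_\pm(\xi_1,\xi_2)$ defined below satisfy, with implicit constants independent of $N$: (1) if $|\xi_1|\gg|\xi_2|$, then $|\sigma_\pm(\xi_1,\xi_2)-m_{1-s,N}(\xi_1)^2|\lesssim \frac{|\xi_2|^2}{|\xi_1|^2}+\frac{1}{|\xi_1|}$; (2) if $|\xi_1|\sim|\xi_2|$, then $|\sigma_\pm(\xi_1,\xi_2)|\lesssim 1$.
   Context: For $q\ge0$ and $N\gg1$, $m_{q,N}\in C^\infty(\mathbb{R}^2)$ is a radial function, non-increasing in $|\xi|$, with $m_{q,N}(\xi)=1$ for $|\xi|<N$ and $m_{q,N}(\xi)=(N/|\xi|)^q$ for $|\xi|>2N$. Write $\xi_{12}=\xi_1+\xi_2$, $m_{1-s,j}=m_{1-s,N}(\xi_j)$, $m_{-r,12}=m_{-r,N}(\xi_{12})$. Define \[ \sigma^Z_\pm(\xi_1,\xi_2):=\frac{|\xi_1|^2m_{1-s,1}^2-|\xi_2|^2m_{1-s,2}^2\pm|\xi_{12}|m_{-r,12}^2}{|\xi_1|^2-|\xi_2|^2\pm|\xi_{12}|},\qquad \sigma^S(\xi_1,\xi_2):=\frac{|\xi_1|^2m_{1-s,1}^2-|\xi_2|^2m_{1-s,2}^2}{|\xi_1|^2-|\xi_2|^2}, \] and $\sigma_\pm(\xi_1,\xi_2):=\sigma^Z_\pm(\xi_1,\xi_2)$ if $\big||\xi_1|^2-|\xi_2|^2\big|>2|\xi_{12}|$, and $\sigma_\pm(\xi_1,\xi_2):=\sigma^S(\xi_1,\xi_2)$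 if $\big||\xi_1|^2-|\xi_2|^2\big|\le2|\xi_{12}|$ (with $\sigma^S$ extended by continuity where $|\xi_1|=|\xi_2|$). The variables $\xi_1,\xi_2$ range over $\mathbb{R}^2$ or over the lattice $\gamma_1^{-1}\mathbb{Z}\times\gamma_2^{-1}\mathbb{Z}$. "$A\gg B$" means $A\ge CB$ for a sufficiently large absolute constant $C$; "$A\sim B$" means $C^{-1}B\le A\le CB$. *)

theory Defs
  imports "HOL-Analysis.Analysis"
begin

definition smooth_real :: "(real \<Rightarrow> real) \<Rightarrow> bool" where
  "smooth_real f \<longleftrightarrow> (\<forall>k x. ((deriv ^^ k) f) differentiable (at x))"

text \<open>Radial profile rho of the multiplier m_{q,N}(xi) = rho(|xi|/N):
  smooth, non-increasing, equal to 1 below 1 and to t^(-q) above 2.\<close>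
definition admissible_profile :: "real \<Rightarrow> (real \<Rightarrow> real) \<Rightarrow> bool" where
  "admissible_profile q \<rho> \<longleftrightarrow>
     smooth_real \<rho> \<and>
     (\<forall>x y. x \<le> y \<longrightarrow> \<rho> y \<le> \<rho> x) \<and>
     (\<forall>t. t < 1 \<longrightarrow> \<rho> t = 1) \<and>
     (\<forall>t. t > 2 \<longrightarrow> \<rho> t = t powr (- q))"

definition mult :: "(real \<Rightarrow> real) \<Rightarrow> real \<Rightarrow> real^2 \<Rightarrow> real" where
  "mult \<rho> N \<xi> = \<rho> (norm \<xi> / N)"

text \<open>sigma^Z_pm, pm = 1 or -1; rho1 is the profile of m_{1-s,N}, rho2 that of m_{-r,N}.\<close>
definition sigmaZ :: "(real \<Rightarrow> real) \<Rightarrow> (real \<Rightarrow> real) \<Rightarrow> real \<Rightarrow> real \<Rightarrow> real^2 \<Rightarrow> real^2 \<Rightarrow> real" where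
  "sigmaZ \<rho>1 \<rho>2 N pm \<xi>1 \<xi>2 =
     (norm \<xi>1 ^ 2 * (mult \<rho>1 N \<xi>1)\<^sup>2 - norm \<xi>2 ^ 2 * (mult \<rho>1 N \<xi>2)\<^sup>2
        + pm * norm (\<xi>1 + \<xi>2) * (mult \<rho>2 N (\<xi>1 + \<xi>2))\<^sup>2)
     / (norm \<xi>1 ^ 2 - norm \<xi>2 ^ 2 + pm * norm (\<xi>1 + \<xi>2))"

text \<open>sigma^S, extended by continuity on |xi1| = |xi2|: there it is the derivative
  of u \<mapsto> u * m(sqrt u)^2 at u = |xi1|^2 (the limit of the difference quotient).\<close>
definition sigmaS :: "(real \<Rightarrow> real) \<Rightarrow> real \<Rightarrow> real^2 \<Rightarrow> real^2 \<Rightarrow> real" where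
  "sigmaS \<rho>1 N \<xi>1 \<xi>2 =
     (if norm \<xi>1 = norm \<xi>2
      then deriv (\<lambda>u. u * (\<rho>1 (sqrt u / N))\<^sup>2) (norm \<xi>1 ^ 2)
      else (norm \<xi>1 ^ 2 * (mult \<rho>1 N \<xi>1)\<^sup>2 - norm \<xi>2 ^ 2 * (mult \<rho>1 N \<xi>2)\<^sup>2)
           / (norm \<xi>1 ^ 2 - norm \<xi>2 ^ 2))"

definition sigma :: "(real \<Rightarrow> real) \<Rightarrow> (real \<Rightarrow> real) \<Rightarrow> real \<Rightarrow> real \<Rightarrow> real^2 \<Rightarrow> real^2 \<Rightarrow> real" where
  "sigma \<rho>1 \<rho>2 N pm \<xi>1 \<xi>2 =
     (if \<bar>norm \<xi>1 ^ 2 - norm \<xi>2 ^ 2\<bar> > 2 * norm (\<xi>1 + \<xi>2)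
      then sigmaZ \<rho>1 \<rho>2 N pm \<xi>1 \<xi>2 else sigmaS \<rho>1 N \<xi>1 \<xi>2)"

end

theory Submission
  imports Defs
begin

(* Writing F_N(u) = u * rho(sqrt u / N)^2, we have |xi|^2 m(xi)^2 = F_N(|xi|^2), so sigma^S is a
   difference quotient (on |xi1| = |xi2| a derivative) of F_N. Its derivative
   rho(t)^2 + rho(t) * t rho'(t), t = sqrt u / N, is bounded independently of N, since rho' is
   continuous on [0, 2] and t rho'(t) = -q t^(-q) for t > 2; by the mean value theorem sigma^S is
   bounded. Off the resonant region the term +-|xi12| m_{-r}(xi12)^2 is less than half the denominator
   of sigma^Z, so sigma^Z is bounded too. If |xi1| >= 2|xi2|, then sigma^Z - m(xi1)^2 has numerator
   |xi2|^2 (m(xi1)^2 - m(xi2)^2) +- |xi12| (m(xi12)^2 - m(xi1)^2) = O(|xi2|^2 + |xi1|) over a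
   denominator of size |xi1|^2, while in the resonant region |xi1| <= 4 and the bounded sigma^S is
   absorbed by 1/|xi1|. *)

definition energy_symbol :: "(real \<Rightarrow> real) \<Rightarrow> real \<Rightarrow> real \<Rightarrow> real" where
  "energy_symbol \<rho> N = (\<lambda>u. u * (\<rho> (sqrt u / N))\<^sup>2)"

lemma admissible_profile_antimono:
  assumes "admissible_profile q \<rho>" "x \<le> y"
  shows "\<rho> y \<le> \<rho> x"
  using assms unfolding admissible_profile_def by blast

lemma admissible_profile_le_one:
  assumes "admissible_profile q \<rho>"
  shows "\<rho> t \<le> 1"
proof -
  have "\<rho> t \<le> \<rho> (min t 0)"
    by (rule admissible_profile_antimono[OF assms]) simp
  also have "\<rho> (min t 0) = 1"
    using assms unfolding admissible_profile_def by simp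
  finally show ?thesis .
qed

lemma admissible_profile_nonneg:
  assumes "admissible_profile q \<rho>"
  shows "0 \<le> \<rho> t"
proof -
  have "0 \<le> max t 3 powr (- q)"
    by simp
  also have "\<dots> = \<rho> (max t 3)"
    using assms unfolding admissible_profile_def by simp
  also have "\<dots> \<le> \<rho> t"
    by (rule admissible_profile_antimono[OF assms]) simp
  finally show ?thesis .
qed

lemma admissible_profile_has_deriv:
  assumes "admissible_profile q \<rho>"
  shows "(\<rho> has_real_derivative deriv \<rho> t) (at t)"
proof -
  have "((deriv ^^ 0) \<rho>) differentiable (at t)"
    using assms unfolding admissible_profile_def smooth_real_def by blast
  then show ?thesis
    by (simp add: DERIV_deriv_iff_real_differentiable)
qed

lemma admissible_profile_continuous_deriv:
  assumes "admissible_profile q \<rho>"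
  shows "continuous_on S (deriv \<rho>)"
proof -
  have "((deriv ^^ 1) \<rho>) differentiable (at t)" for t
    using assms unfolding admissible_profile_def smooth_real_def by blast
  then show ?thesis
    by (simp add: differentiable_imp_continuous_within continuous_at_imp_continuous_on)
qed

lemma admissible_profile_deriv_tail:
  assumes "admissible_profile q \<rho>" "t > 2"
  shows "deriv \<rho> t = - q * t powr (- q - 1)"
proof -
  have "((\<lambda>t. t powr (- q)) has_real_derivative - q * t powr (- q - 1)) (at t)"
    using has_real_derivative_powr[of t "- q"] assms(2) by simp
  then have "(\<rho> has_real_derivative - q * t powr (- q - 1)) (at t)"
    by (rule has_field_derivative_transform_within_open[where S = "{2<..}"])
      (use assms in \<open>auto simp: admissible_profile_def\<close>)
  then show ?thesis
    by (rule DERIV_imp_deriv)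
qed

lemma admissible_profile_scaled_deriv_bounded:
  assumes "admissible_profile q \<rho>" "q \<ge> 0"
  obtains B where "\<And>t. t > 0 \<Longrightarrow> \<bar>t * deriv \<rho> t\<bar> \<le> B"
proof -
  have "bounded (deriv \<rho> ` {0..2})"
    by (intro compact_imp_bounded compact_continuous_image
        admissible_profile_continuous_deriv[OF assms(1)] compact_Icc)
  then obtain M where M: "\<forall>t \<in> {0..2}. \<bar>deriv \<rho> t\<bar> \<le> M"
    by (auto simp: bounded_iff)
  have "\<bar>t * deriv \<rho> t\<bar> \<le> max (2 * M) q" if "t > 0" for t
  proof (cases "t \<le> 2")
    case True
    then have "\<bar>t * deriv \<rho> t\<bar> \<le> 2 * M"
      using M that by (simp add: abs_mult mult_mono')
    then show ?thesis
      by simp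
  next
    case False
    then have "\<bar>t * deriv \<rho> t\<bar> = q * t powr (- q)"
      using assms(2) admissible_profile_deriv_tail[OF assms(1), of t]
      by (simp add: abs_mult powr_mult_base)
    also have "\<dots> \<le> q * t powr 0"
      using False assms(2) by (intro mult_left_mono powr_mono) auto
    also have "\<dots> = q"
      using False by simp
    finally show ?thesis
      by simp
  qed
  then show ?thesis
    using that by blast
qed

lemma energy_symbol_norm:
  "energy_symbol \<rho> N (norm \<xi> ^ 2) = norm \<xi> ^ 2 * (mult \<rho> N \<xi>)\<^sup>2"
  by (simp add: energy_symbol_def mult_def)

lemma energy_symbol_eq_self:
  assumes "admissible_profile q \<rho>" "N > 0" "u < N\<^sup>2"
  shows "energy_symbol \<rho> N u = u"
proof -
  have "sqrt u < sqrt (N\<^sup>2)"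
    using assms(3) by (rule real_sqrt_less_mono)
  then have "sqrt u / N < 1"
    using assms(2) by simp
  then show ?thesis
    using assms(1) unfolding admissible_profile_def energy_symbol_def by simp
qed

lemma energy_symbol_has_deriv_one:
  assumes "admissible_profile q \<rho>" "N > 0" "u < N\<^sup>2"
  shows "(energy_symbol \<rho> N has_real_derivative 1) (at u)"
  by (rule has_field_derivative_transform_within_open[where f = "\<lambda>v. v" and S = "{..<N\<^sup>2}"])
    (use energy_symbol_eq_self[OF assms(1,2)] assms(3) in auto)

lemma energy_symbol_has_deriv:
  assumes "admissible_profile q \<rho>" "N > 0" "u > 0"
  defines "t \<equiv> sqrt u / N"
  shows "(energy_symbol \<rho> N has_real_derivative (\<rho> t)\<^sup>2 + \<rho> t * (t * deriv \<rho> t)) (at u)"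
proof -
  have "((\<lambda>v. sqrt v / N) has_real_derivative inverse (sqrt u) / 2 / N) (at u)"
    using assms(2,3) by (auto intro!: derivative_eq_intros)
  from DERIV_chain2[OF admissible_profile_has_deriv[OF assms(1)] this]
  have "((\<lambda>v. \<rho> (sqrt v / N)) has_real_derivative deriv \<rho> t * (inverse (sqrt u) / 2 / N)) (at u)"
    unfolding t_def .
  then have "(energy_symbol \<rho> N has_real_derivative
      1 * (\<rho> t)\<^sup>2 + u * (2 * \<rho> t * (deriv \<rho> t * (inverse (sqrt u) / 2 / N)))) (at u)"
    unfolding energy_symbol_def power2_eq_square t_def
    by (auto intro!: derivative_eq_intros)
  moreover have "u * (2 * \<rho> t * (deriv \<rho> t * (inverse (sqrt u) / 2 / N))) = \<rho> t * (t * deriv \<rho> t)"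
    using assms(2,3) real_sqrt_mult_self[of u] unfolding t_def by (simp add: field_simps)
  ultimately show ?thesis
    by simp
qed

lemma energy_symbol_differentiable:
  assumes "admissible_profile q \<rho>" "N > 0" "u \<ge> 0"
  shows "energy_symbol \<rho> N differentiable (at u)"
proof (cases "u = 0")
  case True
  then show ?thesis
    using energy_symbol_has_deriv_one[OF assms(1,2), of u] assms(2)
    by (auto simp: real_differentiable_def)
next
  case False
  then show ?thesis
    using energy_symbol_has_deriv[OF assms(1,2), of u] assms(3)
    by (auto simp: real_differentiable_def)
qed

lemma energy_symbol_deriv_bounded:
  assumes "admissible_profile q \<rho>" "q \<ge> 0"
  obtains L where "\<And>N u. N > 0 \<Longrightarrow> u \<ge> 0 \<Longrightarrow> \<bar>deriv (energy_symbol \<rho> N) u\<bar> \<le> L"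
proof -
  obtain B where B: "\<And>t. t > 0 \<Longrightarrow> \<bar>t * deriv \<rho> t\<bar> \<le> B"
    using admissible_profile_scaled_deriv_bounded[OF assms] by blast
  have "0 \<le> B"
    using B[of 1] by linarith
  have "\<bar>deriv (energy_symbol \<rho> N) u\<bar> \<le> 1 + B" if "N > 0" "u \<ge> 0" for N u
  proof (cases "u = 0")
    case True
    then have "deriv (energy_symbol \<rho> N) u = 1"
      using energy_symbol_has_deriv_one[OF assms(1) \<open>N > 0\<close>, of u] \<open>N > 0\<close>
      by (simp add: DERIV_imp_deriv)
    then show ?thesis
      using \<open>0 \<le> B\<close> by simp
  next
    case False
    define t where "t = sqrt u / N"
    have "t > 0"
      using False that unfolding t_def by simp
    have "deriv (energy_symbol \<rho> N) u = (\<rho> t)\<^sup>2 + \<rho> t * (t * deriv \<rho> t)"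
      using energy_symbol_has_deriv[OF assms(1) \<open>N > 0\<close>, of u] False that
      unfolding t_def by (simp add: DERIV_imp_deriv)
    moreover have "0 \<le> \<rho> t" "\<rho> t \<le> 1"
      using admissible_profile_nonneg[OF assms(1)] admissible_profile_le_one[OF assms(1)] by auto
    then have "(\<rho> t)\<^sup>2 \<le> 1" "\<bar>\<rho> t * (t * deriv \<rho> t)\<bar> \<le> B"
      using B[OF \<open>t > 0\<close>]
      by (auto simp: abs_mult power_le_one intro: order_trans[OF mult_left_le_one_le])
    ultimately show ?thesis
      by (simp add: abs_triangle_ineq[THEN order_trans])
  qed
  then show ?thesis
    using that by blast
qed

lemma energy_symbol_lipschitz:
  assumes "admissible_profile q \<rho>" "N > 0"
    and L: "\<And>u. u \<ge> 0 \<Longrightarrow> \<bar>deriv (energy_symbol \<rho> N) u\<bar> \<le> L"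
    and "x \<ge> 0" "y \<ge> 0"
  shows "\<bar>energy_symbol \<rho> N x - energy_symbol \<rho> N y\<bar> \<le> L * \<bar>x - y\<bar>"
proof -
  have "(energy_symbol \<rho> N has_real_derivative deriv (energy_symbol \<rho> N) u) (at u within {0..})"
    if "u \<in> {0..}" for u
    using energy_symbol_differentiable[OF assms(1,2)] that
    by (auto simp: DERIV_deriv_iff_real_differentiable intro: has_field_derivative_at_within)
  from field_differentiable_bound[OF convex_real_interval(1) this] show ?thesis
    using L assms(4,5) by auto
qed

lemma sigmaS_bounded:
  assumes "admissible_profile q \<rho>" "N > 0"
    and L: "\<And>u. u \<ge> 0 \<Longrightarrow> \<bar>deriv (energy_symbol \<rho> N) u\<bar> \<le> L"
  shows "\<bar>sigmaS \<rho> N \<xi>1 \<xi>2\<bar> \<le> L"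
proof (cases "norm \<xi>1 = norm \<xi>2")
  case True
  then show ?thesis
    using L unfolding sigmaS_def energy_symbol_def by simp
next
  case False
  then have "norm \<xi>1 ^ 2 \<noteq> norm \<xi>2 ^ 2"
    by (metis norm_ge_zero power2_eq_iff_nonneg)
  moreover have "\<bar>energy_symbol \<rho> N (norm \<xi>1 ^ 2) - energy_symbol \<rho> N (norm \<xi>2 ^ 2)\<bar>
      \<le> L * \<bar>norm \<xi>1 ^ 2 - norm \<xi>2 ^ 2\<bar>"
    by (rule energy_symbol_lipschitz[OF assms]) simp_all
  ultimately show ?thesis
    using False unfolding sigmaS_def
    by (simp add: energy_symbol_norm abs_divide pos_divide_le_eq)
qed

lemma nonresonant_quotient_bounded:
  fixes F w c p Z L :: real
  assumes "\<bar>F\<bar> \<le> L * \<bar>w\<bar>" "2 * c < \<bar>w\<bar>" "0 \<le> c" "\<bar>p\<bar> \<le> 1" "Z \<in> {0..1}" "0 \<le> L"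
  shows "\<bar>(F + p * c * Z) / (w + p * c)\<bar> \<le> 2 * L + 1"
proof -
  have "\<bar>p * c\<bar> \<le> c"
    using assms(3,4) mult_right_mono[OF assms(4,3)] by (simp add: abs_mult)
  then have den: "\<bar>w\<bar> \<le> 2 * \<bar>w + p * c\<bar>" "c \<le> \<bar>w + p * c\<bar>"
    using assms(2) abs_triangle_ineq2[of w "- (p * c)"] by auto
  have "\<bar>p * c * Z\<bar> \<le> c"
    using \<open>\<bar>p * c\<bar> \<le> c\<close> assms(5) by (auto simp: abs_mult intro: order_trans[OF mult_right_le_one_le])
  then have "\<bar>F + p * c * Z\<bar> \<le> L * (2 * \<bar>w + p * c\<bar>) + \<bar>w + p * c\<bar>"
    using assms(1) mult_left_mono[OF den(1) assms(6)] den(2) by linarith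
  moreover have "0 < \<bar>w + p * c\<bar>"
    using den(1) assms(2,3) by argo
  ultimately show ?thesis
    by (simp add: pos_divide_le_eq algebra_simps)
qed

lemma high_low_quotient_estimate:
  fixes a b c p X Y Z :: real
  assumes "0 \<le> b" "2 * b \<le> a" "0 \<le> c" "c \<le> a + b" "2 * c < \<bar>a\<^sup>2 - b\<^sup>2\<bar>" "\<bar>p\<bar> \<le> 1"
    and "X \<in> {0..1}" "Y \<in> {0..1}" "Z \<in> {0..1}"
  shows "\<bar>(a\<^sup>2 * X - b\<^sup>2 * Y + p * c * Z) / (a\<^sup>2 - b\<^sup>2 + p * c) - X\<bar> \<le> 8 * (b\<^sup>2 / a\<^sup>2 + 1 / a)"
proof -
  define D where "D = a\<^sup>2 - b\<^sup>2 + p * c"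
  have "a > 0"
  proof (rule ccontr)
    assume "\<not> a > 0"
    then have "a = 0" "b = 0"
      using assms(1,2) by linarith+
    then show False
      using assms(3,5) by simp
  qed
  have "4 * b\<^sup>2 \<le> a\<^sup>2"
    using power_mono[OF assms(2), of 2] assms(1) by simp
  have "\<bar>p * c\<bar> \<le> c"
    using assms(3,6) mult_right_mono[OF assms(6,3)] by (simp add: abs_mult)
  moreover have "\<bar>a\<^sup>2 - b\<^sup>2\<bar> = a\<^sup>2 - b\<^sup>2"
    using \<open>4 * b\<^sup>2 \<le> a\<^sup>2\<close> zero_le_power2[of b] by linarith
  ultimately have "3 / 8 * a\<^sup>2 \<le> D"
    using assms(5) \<open>4 * b\<^sup>2 \<le> a\<^sup>2\<close> abs_ge_minus_self[of "p * c"] unfolding D_def by linarith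
  have "\<bar>X - Y\<bar> \<le> 1" "\<bar>Z - X\<bar> \<le> 1"
    using assms(7-9) by auto
  then have "\<bar>b\<^sup>2 * (X - Y)\<bar> \<le> b\<^sup>2" "\<bar>p * c * (Z - X)\<bar> \<le> \<bar>p * c\<bar>"
    by (simp_all only: abs_mult[of "b\<^sup>2"] abs_mult[of "p * c"] abs_power2 mult_left_le abs_ge_zero zero_le_power2)
  then have "\<bar>b\<^sup>2 * (X - Y) + p * c * (Z - X)\<bar> \<le> b\<^sup>2 + c"
    using \<open>\<bar>p * c\<bar> \<le> c\<close> abs_triangle_ineq[of "b\<^sup>2 * (X - Y)" "p * c * (Z - X)"] by linarith
  also have "\<dots> \<le> b\<^sup>2 + 3 / 2 * a"
    using assms(2,4) by simp
  finally have num: "\<bar>b\<^sup>2 * (X - Y) + p * c * (Z - X)\<bar> \<le> b\<^sup>2 + 3 / 2 * a" .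
  have "0 < 3 / 8 * a\<^sup>2"
    using \<open>a > 0\<close> by simp
  then have "D > 0"
    using \<open>3 / 8 * a\<^sup>2 \<le> D\<close> by linarith
  have "(a\<^sup>2 * X - b\<^sup>2 * Y + p * c * Z) / D - X = (a\<^sup>2 * X - b\<^sup>2 * Y + p * c * Z - X * D) / D"
    using \<open>D > 0\<close> by (simp add: field_simps)
  also have "a\<^sup>2 * X - b\<^sup>2 * Y + p * c * Z - X * D = b\<^sup>2 * (X - Y) + p * c * (Z - X)"
    unfolding D_def by (simp add: algebra_simps)
  finally have eq: "(a\<^sup>2 * X - b\<^sup>2 * Y + p * c * Z) / D - X = (b\<^sup>2 * (X - Y) + p * c * (Z - X)) / D" .
  have "\<bar>(b\<^sup>2 * (X - Y) + p * c * (Z - X)) / D\<bar> \<le> (b\<^sup>2 + 3 / 2 * a) / (3 / 8 * a\<^sup>2)"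
    unfolding abs_divide using num \<open>3 / 8 * a\<^sup>2 \<le> D\<close> \<open>D > 0\<close> \<open>a > 0\<close>
    by (intro frac_le) simp_all
  also have "\<dots> = 8 / 3 * (b\<^sup>2 / a\<^sup>2) + 4 * (1 / a)"
    using \<open>a > 0\<close> by (simp add: field_simps power2_eq_square)
  also have "\<dots> \<le> 8 * (b\<^sup>2 / a\<^sup>2 + 1 / a)"
    using \<open>a > 0\<close> unfolding distrib_left by (intro add_mono mult_right_mono) simp_all
  finally show ?thesis
    unfolding D_def[symmetric] eq .
qed

lemma mult_squared_in_unit_interval:
  assumes "admissible_profile q \<rho>"
  shows "(mult \<rho> N \<xi>)\<^sup>2 \<in> {0..1}"
  using admissible_profile_nonneg[OF assms] admissible_profile_le_one[OF assms]
  by (simp add: mult_def power_le_one)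

lemma sigmaZ_bounded:
  assumes "admissible_profile q1 \<rho>1" "admissible_profile q2 \<rho>2" "N > 0"
    and L: "\<And>u. u \<ge> 0 \<Longrightarrow> \<bar>deriv (energy_symbol \<rho>1 N) u\<bar> \<le> L"
    and "\<bar>p\<bar> \<le> 1" "2 * norm (\<xi>1 + \<xi>2) < \<bar>norm \<xi>1 ^ 2 - norm \<xi>2 ^ 2\<bar>"
  shows "\<bar>sigmaZ \<rho>1 \<rho>2 N p \<xi>1 \<xi>2\<bar> \<le> 2 * L + 1"
proof -
  have "0 \<le> L"
    using L[of 0] by linarith
  have "\<bar>energy_symbol \<rho>1 N (norm \<xi>1 ^ 2) - energy_symbol \<rho>1 N (norm \<xi>2 ^ 2)\<bar>
      \<le> L * \<bar>norm \<xi>1 ^ 2 - norm \<xi>2 ^ 2\<bar>"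
    by (rule energy_symbol_lipschitz[OF assms(1,3) L]) simp_all
  then show ?thesis
    unfolding sigmaZ_def energy_symbol_norm[symmetric]
    using assms(5,6) mult_squared_in_unit_interval[OF assms(2)] \<open>0 \<le> L\<close>
    by (intro nonresonant_quotient_bounded) auto
qed

lemma sigma_bounded:
  assumes "admissible_profile q1 \<rho>1" "admissible_profile q2 \<rho>2" "N > 0"
    and "\<And>u. u \<ge> 0 \<Longrightarrow> \<bar>deriv (energy_symbol \<rho>1 N) u\<bar> \<le> L"
    and "\<bar>p\<bar> \<le> 1"
  shows "\<bar>sigma \<rho>1 \<rho>2 N p \<xi>1 \<xi>2\<bar> \<le> 2 * L + 1"
proof -
  have "\<bar>sigmaS \<rho>1 N \<xi>1 \<xi>2\<bar> \<le> L"
    using assms(1,3,4) by (rule sigmaS_bounded)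
  moreover have "0 \<le> L"
    using assms(4)[of 0] by linarith
  ultimately show ?thesis
    unfolding sigma_def using sigmaZ_bounded[OF assms] by auto
qed

lemma sigmaZ_high_low:
  assumes "admissible_profile q1 \<rho>1" "admissible_profile q2 \<rho>2"
    and "\<bar>p\<bar> \<le> 1" "2 * norm \<xi>2 \<le> norm \<xi>1"
    and "2 * norm (\<xi>1 + \<xi>2) < \<bar>norm \<xi>1 ^ 2 - norm \<xi>2 ^ 2\<bar>"
  shows "\<bar>sigmaZ \<rho>1 \<rho>2 N p \<xi>1 \<xi>2 - (mult \<rho>1 N \<xi>1)\<^sup>2\<bar>
    \<le> 8 * (norm \<xi>2 ^ 2 / norm \<xi>1 ^ 2 + 1 / norm \<xi>1)"
  unfolding sigmaZ_def
  by (rule high_low_quotient_estimate)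
    (use assms norm_triangle_ineq[of \<xi>1 \<xi>2] mult_squared_in_unit_interval in auto)

lemma sigmaS_high_low:
  assumes "admissible_profile q \<rho>" "N > 0"
    and L: "\<And>u. u \<ge> 0 \<Longrightarrow> \<bar>deriv (energy_symbol \<rho> N) u\<bar> \<le> L"
    and "2 * norm \<xi>2 \<le> norm \<xi>1" "\<bar>norm \<xi>1 ^ 2 - norm \<xi>2 ^ 2\<bar> \<le> 2 * norm (\<xi>1 + \<xi>2)"
  shows "\<bar>sigmaS \<rho> N \<xi>1 \<xi>2 - (mult \<rho> N \<xi>1)\<^sup>2\<bar>
    \<le> 4 * (L + 1) * (norm \<xi>2 ^ 2 / norm \<xi>1 ^ 2 + 1 / norm \<xi>1)"
proof (cases "\<xi>1 = 0")
  case True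
  then have "\<xi>2 = 0"
    using assms(4) by simp
  have "deriv (energy_symbol \<rho> N) 0 = 1"
    using energy_symbol_has_deriv_one[OF assms(1,2), of 0] assms(2) by (simp add: DERIV_imp_deriv)
  moreover have "\<rho> 0 = 1"
    using assms(1) unfolding admissible_profile_def by simp
  ultimately show ?thesis
    using True \<open>\<xi>2 = 0\<close> unfolding sigmaS_def mult_def energy_symbol_def by simp
next
  case False
  define a b where "a = norm \<xi>1" and "b = norm \<xi>2"
  have "0 \<le> L"
    using L[of 0] by linarith
  have "a > 0"
    using False unfolding a_def by simp
  have "4 * b\<^sup>2 \<le> a\<^sup>2"
    using power_mono[OF assms(4), of 2] unfolding a_def b_def by simp
  moreover have "a\<^sup>2 - b\<^sup>2 \<le> 3 * a"
    using assms(4,5) norm_triangle_ineq[of \<xi>1 \<xi>2] unfolding a_def b_def by linarith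
  ultimately have "a * a \<le> 4 * a"
    unfolding power2_eq_square by linarith
  then have "a \<le> 4"
    using \<open>a > 0\<close> by simp
  have "\<bar>sigmaS \<rho> N \<xi>1 \<xi>2\<bar> \<le> L"
    using assms(1-3) by (rule sigmaS_bounded)
  then have "\<bar>sigmaS \<rho> N \<xi>1 \<xi>2 - (mult \<rho> N \<xi>1)\<^sup>2\<bar> \<le> L + 1"
    using mult_squared_in_unit_interval[OF assms(1), of N \<xi>1] unfolding atLeastAtMost_iff by linarith
  also have "\<dots> \<le> 4 * (L + 1) * (1 / a)"
    using mult_left_mono[OF \<open>a \<le> 4\<close>, of "L + 1"] \<open>0 \<le> L\<close> \<open>a > 0\<close> by (simp add: field_simps)
  also have "\<dots> \<le> 4 * (L + 1) * (b\<^sup>2 / a\<^sup>2 + 1 / a)"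
    using \<open>0 \<le> L\<close> by (intro mult_left_mono) auto
  finally show ?thesis
    unfolding a_def b_def .
qed

lemma sigma_high_low:
  assumes "admissible_profile q1 \<rho>1" "admissible_profile q2 \<rho>2" "N > 0"
    and "\<And>u. u \<ge> 0 \<Longrightarrow> \<bar>deriv (energy_symbol \<rho>1 N) u\<bar> \<le> L"
    and "\<bar>p\<bar> \<le> 1" "2 * norm \<xi>2 \<le> norm \<xi>1"
  shows "\<bar>sigma \<rho>1 \<rho>2 N p \<xi>1 \<xi>2 - (mult \<rho>1 N \<xi>1)\<^sup>2\<bar>
    \<le> max 8 (4 * (L + 1)) * (norm \<xi>2 ^ 2 / norm \<xi>1 ^ 2 + 1 / norm \<xi>1)"
    (is "?lhs \<le> max 8 (4 * (L + 1)) * ?R")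
proof (cases "2 * norm (\<xi>1 + \<xi>2) < \<bar>norm \<xi>1 ^ 2 - norm \<xi>2 ^ 2\<bar>")
  case True
  then have "?lhs \<le> 8 * ?R"
    unfolding sigma_def using sigmaZ_high_low[OF assms(1,2,5,6)] by simp
  also have "\<dots> \<le> max 8 (4 * (L + 1)) * ?R"
    by (intro mult_right_mono) simp_all
  finally show ?thesis .
next
  case False
  then have "?lhs \<le> 4 * (L + 1) * ?R"
    unfolding sigma_def using sigmaS_high_low[OF assms(1,3,4,6)] by simp
  also have "\<dots> \<le> max 8 (4 * (L + 1)) * ?R"
    by (intro mult_right_mono) simp_all
  finally show ?thesis .
qed

theorem lemma3p1:
  fixes s r :: real and \<rho>1 \<rho>2 :: "real \<Rightarrow> real"
  assumes "s < 1" and "r \<le> 0"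
    and "admissible_profile (1 - s) \<rho>1"
    and "admissible_profile (- r) \<rho>2"
  shows "(\<exists>K > 0. \<exists>C. \<forall>N \<ge> K. \<forall>pm \<in> {1, -1}. \<forall>\<xi>1 \<xi>2 :: real^2.
            norm \<xi>1 \<ge> K * norm \<xi>2 \<longrightarrow>
            \<bar>sigma \<rho>1 \<rho>2 N pm \<xi>1 \<xi>2 - (mult \<rho>1 N \<xi>1)\<^sup>2\<bar>
              \<le> C * (norm \<xi>2 ^ 2 / norm \<xi>1 ^ 2 + 1 / norm \<xi>1))
       \<and> (\<forall>A \<ge> 1. \<exists>N0 C. \<forall>N \<ge> N0. \<forall>pm \<in> {1, -1}. \<forall>\<xi>1 \<xi>2 :: real^2.
            norm \<xi>2 \<le> A * norm \<xi>1 \<and> norm \<xi>1 \<le> A * norm \<xi>2 \<longrightarrow>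
            \<bar>sigma \<rho>1 \<rho>2 N pm \<xi>1 \<xi>2\<bar> \<le> C)"
proof -
  (* Part (2) holds without comparability of xi1 and xi2. *)
  obtain L where L: "\<And>N u. N > 0 \<Longrightarrow> u \<ge> 0 \<Longrightarrow> \<bar>deriv (energy_symbol \<rho>1 N) u\<bar> \<le> L"
    using energy_symbol_deriv_bounded[OF assms(3)] assms(1) by auto
  have pm: "\<bar>pm\<bar> \<le> 1" if "pm \<in> {1, -1}" for pm :: real
    using that by auto
  let "?high_low \<and> ?comparable" = ?thesis
  have ?high_low
  proof (rule exI[of _ 2], intro conjI exI[of _ "max 8 (4 * (L + 1))"] allI impI ballI)
    fix N pm :: real and \<xi>1 \<xi>2 :: "real^2"
    assume "2 \<le> N" "pm \<in> {1, -1}" "2 * norm \<xi>2 \<le> norm \<xi>1"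
    then show "\<bar>sigma \<rho>1 \<rho>2 N pm \<xi>1 \<xi>2 - (mult \<rho>1 N \<xi>1)\<^sup>2\<bar>
        \<le> max 8 (4 * (L + 1)) * (norm \<xi>2 ^ 2 / norm \<xi>1 ^ 2 + 1 / norm \<xi>1)"
      by (intro sigma_high_low[OF assms(3,4)] L pm) auto
  qed simp
  moreover have ?comparable
  proof (intro allI impI, rule exI[of _ 1], intro exI[of _ "2 * L + 1"] allI impI ballI)
    fix N pm :: real and \<xi>1 \<xi>2 :: "real^2"
    assume "1 \<le> N" "pm \<in> {1, -1}"
    then show "\<bar>sigma \<rho>1 \<rho>2 N pm \<xi>1 \<xi>2\<bar> \<le> 2 * L + 1"
      by (intro sigma_bounded[OF assms(3,4)] L pm) auto
  qed
  ultimately show ?thesis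
    by blast
qed

end
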